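(* Let $q$ be a prime power, $n\ge 2$ and $\kappa$ integers with $2\le\kappa<n$, and let $\mathcal{C}_1\subseteq\mathbb{F}_q^n$ be a linear cyclic code of length $n$, dimension $\kappa-1$ and minimum Hamming distance $d$. Let $\mathbf{e}=(1,0,\dots,0)\in\mathbb{F}_q^n$ and $\mathcal{C}=\{\mathbf{a}+\mathbf{e}:\mathbf{a}\in\mathcal{C}_1\}$. Then $\mathcal{C}$ is a $\kappa$-WMU code with minimum Hamming distance $d$.
   Context: A linear cyclic code is a linear subspace of $\mathbb{F}_q^n$ closed under cyclic shifts. A code $\mathcal{C}\subseteq\mathbb{F}_q^n$ is $\kappa$-WMU ($1\le\kappa<n$) if for all not necessarily distinct $\mathbf{a},\mathbf{b}\in\mathcal{C}$ and all $\kappa\le l<n$, $(a_1,\dots,a_l)\ne(b_{n-l+1},\dots,b_n)$. *)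

theory Defs
  imports Complex_Main "HOL-Library.Function_Algebras"
begin

text \<open>Vectors of F_q^n are represented as functions nat => 'a that vanish
  outside the index range {0..<n} (0-based indexing).\<close>

definition fscale :: "'a::field \<Rightarrow> (nat \<Rightarrow> 'a) \<Rightarrow> (nat \<Rightarrow> 'a)" where
  "fscale c x = (\<lambda>i. c * x i)"

interpretation fv: vector_space "fscale :: 'a::field \<Rightarrow> (nat \<Rightarrow> 'a) \<Rightarrow> (nat \<Rightarrow> 'a)"
  by unfold_locales (auto simp: fscale_def algebra_simps fun_eq_iff)

definition Fn :: "nat \<Rightarrow> (nat \<Rightarrow> 'a::field) set" where
  "Fn n = {x. \<forall>i\<ge>n. x i = 0}"

definition linear_code :: "nat \<Rightarrow> (nat \<Rightarrow> 'a::field) set \<Rightarrow> bool" where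
  "linear_code n C \<longleftrightarrow> C \<subseteq> Fn n \<and> fv.subspace C"

definition cyc_shift :: "nat \<Rightarrow> (nat \<Rightarrow> 'a::field) \<Rightarrow> (nat \<Rightarrow> 'a)" where
  "cyc_shift n x = (\<lambda>i. if i < n then x ((i + n - 1) mod n) else 0)"

definition linear_cyclic_code :: "nat \<Rightarrow> (nat \<Rightarrow> 'a::field) set \<Rightarrow> bool" where
  "linear_cyclic_code n C \<longleftrightarrow> linear_code n C \<and> (\<forall>x\<in>C. cyc_shift n x \<in> C)"

definition hamming_dist :: "nat \<Rightarrow> (nat \<Rightarrow> 'a) \<Rightarrow> (nat \<Rightarrow> 'a) \<Rightarrow> nat" where
  "hamming_dist n x y = card {i. i < n \<and> x i \<noteq> y i}"

definition min_dist :: "nat \<Rightarrow> (nat \<Rightarrow> 'a) set \<Rightarrow> nat" where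
  "min_dist n C = Min {hamming_dist n x y | x y. x \<in> C \<and> y \<in> C \<and> x \<noteq> y}"

text \<open>kappa-WMU: for all a, b in C and kappa <= l < n,
  (a_1,...,a_l) differs from (b_{n-l+1},...,b_n); 0-based here.\<close>
definition WMU :: "nat \<Rightarrow> nat \<Rightarrow> (nat \<Rightarrow> 'a) set \<Rightarrow> bool" where
  "WMU n \<kappa> C \<longleftrightarrow> (\<forall>a\<in>C. \<forall>b\<in>C. \<forall>l. \<kappa> \<le> l \<and> l < n \<longrightarrow>
      \<not> (\<forall>i<l. a i = b (n - l + i)))"

definition unit_e :: "nat \<Rightarrow> 'a::field" where
  "unit_e = (\<lambda>i. if i = 0 then 1 else 0)"

end

theory Submission
  imports Defs
begin

text \<open>Translation by a fixed vector preserves Hamming distances, so the coset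
  has the same minimum distance as the code. For the WMU property, suppose a
  prefix of length \<open>l \<ge> \<kappa>\<close> of \<open>a + e\<close> equals the suffix of \<open>b + e\<close>. Cyclically
  shifting \<open>b\<close> by \<open>l\<close> moves that suffix to the front, and \<open>v = a - shift\<^sup>l b\<close>
  is a codeword with \<open>v\<^sub>0 = -1\<close> followed by \<open>l - 1\<close> zeros. The shifts
  \<open>v, shift v, \<dots>, shift\<^sup>l\<^sup>-\<^sup>1 v\<close> form a triangular, hence independent, family
  of \<open>l\<close> codewords, contradicting \<open>dim C\<^sub>1 = \<kappa> - 1 < l\<close>.\<close>

lemma finite_Fn: "finite (Fn n :: (nat \<Rightarrow> 'a::{field,finite}) set)"
proof -
  have "Fn n = {x :: nat \<Rightarrow> 'a. \<forall>i. (i \<in> {..<n} \<longrightarrow> x i \<in> UNIV) \<and> (i \<notin> {..<n} \<longrightarrow> x i = 0)}"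
    by (auto simp: Fn_def)
  then show ?thesis
    by (simp only:) (rule finite_set_of_finite_funs; simp)
qed

lemma fv_card_le_dim:
  assumes "B \<subseteq> V" "fv.independent B" "finite V"
  shows "card B \<le> fv.dim V"
proof -
  obtain B' where B': "B' \<subseteq> V" "V \<subseteq> fv.span B'" "card B' = fv.dim V"
    by (rule fv.basis_exists)
  have "finite B'"
    using B'(1) assms(3) finite_subset by blast
  with fv.independent_span_bound[OF _ assms(2)] B' assms(1) show ?thesis
    by fastforce
qed

lemma sum_fun_apply: "(sum f A) x = (\<Sum>a\<in>A. f a x)"
  by (induction A rule: infinite_finite_induct) auto

lemma inj_on_triangular:
  fixes w :: "nat \<Rightarrow> nat \<Rightarrow> 'a::zero"
  assumes diag: "\<And>j. j < k \<Longrightarrow> w j j \<noteq> 0"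
    and upper: "\<And>i j. j < i \<Longrightarrow> i < k \<Longrightarrow> w j i = 0"
  shows "inj_on w {..<k}"
proof (rule inj_onI)
  fix j j' assume "j \<in> {..<k}" "j' \<in> {..<k}" "w j = w j'"
  then show "j = j'"
    using diag upper by (metis lessThan_iff linorder_neqE_nat)
qed

lemma independent_triangular:
  fixes w :: "nat \<Rightarrow> nat \<Rightarrow> 'a::field"
  assumes diag: "\<And>j. j < k \<Longrightarrow> w j j \<noteq> 0"
    and upper: "\<And>i j. j < i \<Longrightarrow> i < k \<Longrightarrow> w j i = 0"
  shows "fv.independent (w ` {..<k})"
proof (rule fv.independent_if_scalars_zero)
  have inj: "inj_on w {..<k}"
    using assms by (rule inj_on_triangular)
  fix f x
  assume "(\<Sum>x\<in>w ` {..<k}. fscale (f x) x) = 0" and x: "x \<in> w ` {..<k}"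
  then have comb: "(\<Sum>j<k. fscale (f (w j)) (w j)) = 0"
    by (simp add: sum.reindex[OF inj])
  show "f x = 0"
  proof (rule ccontr)
    assume "f x \<noteq> 0"
    define J where "J = {j. j < k \<and> f (w j) \<noteq> 0}"
    define m where "m = Max J"
    have "J \<noteq> {}" "finite J"
      using x \<open>f x \<noteq> 0\<close> by (auto simp: J_def)
    then have m: "m < k" "f (w m) \<noteq> 0"
      using Max_in[of J] by (auto simp: m_def J_def)
    have above_m: "f (w j) = 0" if "j < k" "m < j" for j
      using Max_ge[OF \<open>finite J\<close>, of j] that unfolding m_def J_def by fastforce
    \<comment> \<open>at coordinate \<open>m\<close>, only the term \<open>j = m\<close> survives\<close>
    have "0 = (\<Sum>j<k. f (w j) * w j m)"
      using fun_cong[OF comb, of m] by (simp add: sum_fun_apply fscale_def)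
    also have "\<dots> = (\<Sum>j<k. if j = m then f (w m) * w m m else 0)"
    proof (rule sum.cong[OF refl])
      fix j assume "j \<in> {..<k}"
      then show "f (w j) * w j m = (if j = m then f (w m) * w m m else 0)"
        using upper[of j m] above_m[of j] m(1) by (cases "j < m") auto
    qed
    also have "\<dots> = f (w m) * w m m"
      using m(1) by simp
    finally show False
      using m diag[of m] by simp
  qed
qed simp

lemma funpow_cyc_shift:
  assumes "x \<in> Fn n" "j \<le> n" "0 < n"
  shows "(cyc_shift n ^^ j) x = (\<lambda>i. if i < n then x ((i + (n - j)) mod n) else 0)"
  using assms(2)
proof (induction j)
  case 0
  then show ?case
    using assms(1) by (auto simp: fun_eq_iff Fn_def)
next
  case (Suc j)
  have idx: "((i + (n - 1)) mod n + (n - j)) mod n = (i + (n - Suc j)) mod n" for i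
  proof -
    have "((i + (n - 1)) mod n + (n - j)) mod n = (i + (n - 1) + (n - j)) mod n"
      by (simp add: mod_add_left_eq)
    also have "i + (n - 1) + (n - j) = (i + (n - Suc j)) + n"
      using Suc.prems assms(3) by simp
    finally show ?thesis by simp
  qed
  show ?case
    using Suc assms(3) idx by (auto simp: fun_eq_iff cyc_shift_def)
qed

lemma funpow_cyc_shift_in_code:
  assumes "linear_cyclic_code n C" "x \<in> C"
  shows "(cyc_shift n ^^ j) x \<in> C"
  using assms by (induction j) (auto simp: linear_cyclic_code_def)

lemma linear_cyclic_code_dim_ge_zero_run:
  fixes C :: "(nat \<Rightarrow> 'a::{field,finite}) set"
  assumes code: "linear_cyclic_code n C" and "v \<in> C" and "v 0 \<noteq> 0"
    and zeros: "\<And>i. 0 < i \<Longrightarrow> i < l \<Longrightarrow> v i = 0" and "l \<le> n"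
  shows "l \<le> fv.dim C"
proof (cases "l = 0")
  case False
  have C: "C \<subseteq> Fn n"
    using code by (simp add: linear_cyclic_code_def linear_code_def)
  define w where "w j = (cyc_shift n ^^ j) v" for j
  have w: "w j i = v ((i + (n - j)) mod n)" if "j < l" "i < l" for i j
    using funpow_cyc_shift[of v n j] that \<open>v \<in> C\<close> C \<open>l \<le> n\<close> by (auto simp: w_def)
  have diag: "w j j \<noteq> 0" if "j < l" for j
    using w[OF that that] that \<open>l \<le> n\<close> \<open>v 0 \<noteq> 0\<close> by simp
  have upper: "w j i = 0" if "j < i" "i < l" for i j
  proof -
    have "(i + (n - j)) mod n = i - j"
      using that \<open>l \<le> n\<close> by (simp add: mod_if)
    then show ?thesis
      using w[of j i] zeros[of "i - j"] that by simp
  qed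
  have "w ` {..<l} \<subseteq> C"
    using funpow_cyc_shift_in_code[OF code \<open>v \<in> C\<close>] by (auto simp: w_def)
  from fv_card_le_dim[OF this independent_triangular[of l w, OF diag upper]]
  show ?thesis
    using card_image[OF inj_on_triangular[of l w, OF diag upper]] C finite_Fn finite_subset
    by fastforce
qed simp

lemma min_dist_translate:
  fixes C :: "(nat \<Rightarrow> 'a::cancel_semigroup_add) set"
  shows "min_dist n ((\<lambda>a. a + t) ` C) = min_dist n C"
proof -
  have "{hamming_dist n x y |x y. x \<in> (\<lambda>a. a + t) ` C \<and> y \<in> (\<lambda>a. a + t) ` C \<and> x \<noteq> y}
      = {hamming_dist n (x + t) (y + t) |x y. x \<in> C \<and> y \<in> C \<and> x + t \<noteq> y + t}"
    by blast
  also have "\<dots> = {hamming_dist n x y |x y. x \<in> C \<and> y \<in> C \<and> x \<noteq> y}"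
    by (simp add: hamming_dist_def)
  finally show ?thesis
    by (simp add: min_dist_def)
qed

lemma WMU_translate_unit_e:
  fixes C :: "(nat \<Rightarrow> 'a::{field,finite}) set"
  assumes code: "linear_cyclic_code n C" and "0 < \<kappa>" and "fv.dim C < \<kappa>"
  shows "WMU n \<kappa> ((\<lambda>a. a + unit_e) ` C)"
  unfolding WMU_def
proof clarify
  fix a b l
  assume "a \<in> C" "b \<in> C" "\<kappa> \<le> l" "l < n"
    and overlap: "\<forall>i<l. (a + unit_e) i = (b + unit_e) (n - l + i)"
  have "b \<in> Fn n"
    using code \<open>b \<in> C\<close> by (auto simp: linear_cyclic_code_def linear_code_def)
  define v where "v = a - (cyc_shift n ^^ l) b"
  have shifted: "(cyc_shift n ^^ l) b i = b (n - l + i)" if "i < l" for i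
    using funpow_cyc_shift[OF \<open>b \<in> Fn n\<close>, of l] that \<open>l < n\<close> by (simp add: add.commute)
  have "v \<in> C"
    using code \<open>a \<in> C\<close> funpow_cyc_shift_in_code[OF code \<open>b \<in> C\<close>]
    by (auto simp: v_def linear_cyclic_code_def linear_code_def intro: fv.subspace_diff)
  moreover have "v 0 \<noteq> 0"
    using overlap shifted[of 0] \<open>0 < \<kappa>\<close> \<open>\<kappa> \<le> l\<close> \<open>l < n\<close> by (auto simp: v_def unit_e_def)
  moreover have "v i = 0" if "0 < i" "i < l" for i
    using overlap shifted[of i] that \<open>l < n\<close> by (auto simp: v_def unit_e_def)
  ultimately have "l \<le> fv.dim C"
    using linear_cyclic_code_dim_ge_zero_run[OF code] \<open>l < n\<close> by simp
  then show False
    using \<open>fv.dim C < \<kappa>\<close> \<open>\<kappa> \<le> l\<close> by simp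
qed

theorem mainTheorem6:
  fixes C1 :: "(nat \<Rightarrow> 'a::{field, finite}) set"
    and n \<kappa> d :: nat
  assumes "n \<ge> 2" and "2 \<le> \<kappa>" and "\<kappa> < n"
    and "linear_cyclic_code n C1"
    and "fv.dim C1 = \<kappa> - 1"
    and "min_dist n C1 = d"
  shows "WMU n \<kappa> ((\<lambda>a. a + unit_e) ` C1) \<and> min_dist n ((\<lambda>a. a + unit_e) ` C1) = d"
  using WMU_translate_unit_e[OF assms(4)] min_dist_translate[of n unit_e C1] assms(2,5,6)
  by simp

end
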